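(* Let $G$ be a simple graph on $n$ vertices with $cM_2(G)\ge cM_2(H)$ for every simple graph $H$ on $n$ vertices, and let $X$ be as defined in the context. Then every $u\in X$ satisfies $d_{G[X]}(u)\ge |X|-2$.
   Context: All graphs are finite and simple; $d_G(u)$ is the degree of $u$ and $cM_2(G)=\sum_{uv\in E(G)}|d_G(u)^2-d_G(v)^2|$; $G[X]$ is the subgraph induced by $X$. The canonical mixed graph $F$ of $G$ has vertex set $V(G)$; for each edge $uv\in E(G)$: if $d_G(u)>d_G(v)$ then $F$ contains the arc $\overrightarrow{uv}$, and if $d_G(u)=d_G(v)$ then $F$ contains the undirected edge $uv$. $d^+_F(u)$ (resp. $d^-_F(u)$) is the number of arcs of $F$ with tail (resp. head) $u$. $X=\{u\in V(G): d^+_F(u)\ge d^-_F(u)\}$. *)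

theory Defs
  imports Main
begin

definition simple_graph :: "'a set \<Rightarrow> 'a set set \<Rightarrow> bool" where
  "simple_graph V E \<longleftrightarrow> finite V \<and>
     E \<subseteq> {e. \<exists>u v. e = {u, v} \<and> u \<noteq> v \<and> u \<in> V \<and> v \<in> V}"

definition deg :: "'a set set \<Rightarrow> 'a \<Rightarrow> nat" where
  "deg E u = card {v. {u, v} \<in> E}"

text \<open>cM_2(G) = sum over edges uv of |d(u)^2 - d(v)^2|; summing over ordered pairs
  counts each edge twice, hence the division by 2.\<close>
definition cM2 :: "'a set set \<Rightarrow> int" where
  "cM2 E = (\<Sum>p\<in>{(u, v). {u, v} \<in> E}.
              \<bar>int (deg E (fst p) ^ 2) - int (deg E (snd p) ^ 2)\<bar>) div 2"

definition arcs :: "'a set set \<Rightarrow> ('a \<times> 'a) set" where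
  "arcs E = {(u, v). {u, v} \<in> E \<and> deg E u > deg E v}"

definition out_deg :: "'a set set \<Rightarrow> 'a \<Rightarrow> nat" where
  "out_deg E u = card {v. (u, v) \<in> arcs E}"

definition in_deg :: "'a set set \<Rightarrow> 'a \<Rightarrow> nat" where
  "in_deg E u = card {v. (v, u) \<in> arcs E}"

definition Xset :: "'a set \<Rightarrow> 'a set set \<Rightarrow> 'a set" where
  "Xset V E = {u \<in> V. out_deg E u \<ge> in_deg E u}"

definition induced_deg :: "'a set set \<Rightarrow> 'a set \<Rightarrow> 'a \<Rightarrow> nat" where
  "induced_deg E S u = card {v \<in> S. {u, v} \<in> E}"

end

theory Submission
  imports Defs
begin

text \<open>Adding a missing edge \<open>pq\<close> changes \<open>cM\<^sub>2\<close> by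
  \<open>(2d(p)+1) b(p) + (2d(q)+1) b(q) + |(d(p)+1)\<^sup>2 - (d(q)+1)\<^sup>2|\<close>, where the degree balance
  \<open>b(x)\<close> counts the neighbours of \<open>x\<close> of degree at most \<open>d(x)\<close> minus those of larger degree.
  Since \<open>b(x) \<ge> d\<^sup>+(x) - d\<^sup>-(x)\<close>, the balance is nonnegative on \<open>X\<close>, so in a maximiser any two
  non-adjacent vertices of \<open>X\<close> have equal degree. If \<open>u \<in> X\<close> missed two vertices \<open>v, w\<close> of \<open>X\<close>,
  adding \<open>uv\<close> would not decrease \<open>cM\<^sub>2\<close>, raise \<open>b(u)\<close> by at least one, lower \<open>b(w)\<close> by at most
  two and make \<open>d(u) = d(w) + 1\<close>; adding \<open>uw\<close> afterwards would then gain at least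
  \<open>(2d+3) - 2(2d+1) + (2d+3) = 4\<close>, contradicting maximality.\<close>

definition nbrs :: "'a set set \<Rightarrow> 'a \<Rightarrow> 'a set" where
  "nbrs E x = {y. {x, y} \<in> E}"

definition edge_pairs :: "'a set set \<Rightarrow> ('a \<times> 'a) set" where
  "edge_pairs E = {(x, y). {x, y} \<in> E}"

definition sq_deg_gap :: "'a set set \<Rightarrow> 'a \<Rightarrow> 'a \<Rightarrow> int" where
  "sq_deg_gap E x y = \<bar>int (deg E x ^ 2) - int (deg E y ^ 2)\<bar>"

definition deg_balance :: "'a set set \<Rightarrow> 'a \<Rightarrow> int" where
  "deg_balance E x = (\<Sum>y\<in>nbrs E x. if deg E y \<le> deg E x then 1 else -1)"

lemma cM2_eq_sum_edge_pairs: "cM2 E = (\<Sum>(x, y)\<in>edge_pairs E. sq_deg_gap E x y) div 2"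
  unfolding cM2_def edge_pairs_def sq_deg_gap_def by (simp add: case_prod_beta)

lemma deg_eq_card_nbrs: "deg E x = card (nbrs E x)"
  unfolding deg_def nbrs_def ..

lemma simple_graph_edgeD:
  assumes "simple_graph V E" "{x, y} \<in> E"
  shows "x \<in> V" "y \<in> V" "x \<noteq> y"
proof -
  obtain a b where "{x, y} = {a, b}" "a \<noteq> b" "a \<in> V" "b \<in> V"
    using assms unfolding simple_graph_def by blast
  then show "x \<in> V" "y \<in> V" "x \<noteq> y" by (auto simp: doubleton_eq_iff)
qed

lemma nbrs_subset: "simple_graph V E \<Longrightarrow> nbrs E x \<subseteq> V"
  unfolding nbrs_def by (auto dest: simple_graph_edgeD)

lemma finite_nbrs:
  assumes "simple_graph V E" shows "finite (nbrs E x)"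
proof (rule finite_subset)
  show "nbrs E x \<subseteq> V" using nbrs_subset[OF assms] .
  show "finite V" using assms unfolding simple_graph_def by simp
qed

lemma not_in_nbrs_self: "simple_graph V E \<Longrightarrow> x \<notin> nbrs E x"
  unfolding nbrs_def using simple_graph_edgeD(3)[of V E x x] by auto

lemma edge_pairs_eq_Sigma: "simple_graph V E \<Longrightarrow> edge_pairs E = Sigma V (nbrs E)"
  unfolding edge_pairs_def nbrs_def by (auto dest: simple_graph_edgeD)

lemma mem_edge_pairs_iff: "(x, y) \<in> edge_pairs E \<longleftrightarrow> {x, y} \<in> E"
  unfolding edge_pairs_def by simp

lemma finite_edge_pairs:
  assumes "simple_graph V E" shows "finite (edge_pairs E)"
proof -
  have "finite V" using assms unfolding simple_graph_def by simp
  then show ?thesis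
    unfolding edge_pairs_eq_Sigma[OF assms] using finite_nbrs[OF assms] by blast
qed

lemma sum_edge_pairs_swap: "(\<Sum>(x, y)\<in>edge_pairs E. f y x) = (\<Sum>(x, y)\<in>edge_pairs E. f x y)"
  by (rule sum.reindex_bij_witness[of _ prod.swap prod.swap])
     (auto simp: edge_pairs_def insert_commute)

lemma sum_edge_pairs_by_vertex:
  assumes "simple_graph V E"
  shows "(\<Sum>(x, y)\<in>edge_pairs E. f x y) = (\<Sum>x\<in>V. \<Sum>y\<in>nbrs E x. f x y)"
  unfolding edge_pairs_eq_Sigma[OF assms]
  using assms finite_nbrs[OF assms] by (simp add: simple_graph_def sum.Sigma)

lemma simple_graph_insert_edge:
  "simple_graph V E \<Longrightarrow> p \<in> V \<Longrightarrow> q \<in> V \<Longrightarrow> p \<noteq> q \<Longrightarrow> simple_graph V (insert {p, q} E)"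
  unfolding simple_graph_def by blast

lemma nbrs_insert_edge:
  "p \<noteq> q \<Longrightarrow> nbrs (insert {p, q} E) x =
     nbrs E x \<union> (if x = p then {q} else {}) \<union> (if x = q then {p} else {})"
  unfolding nbrs_def by (auto simp: doubleton_eq_iff)

lemma deg_insert_edge:
  assumes "simple_graph V E" "p \<noteq> q" "{p, q} \<notin> E"
  shows "deg (insert {p, q} E) x = deg E x + (if x = p \<or> x = q then 1 else 0)"
proof -
  have "q \<notin> nbrs E p" "p \<notin> nbrs E q"
    using assms(3) unfolding nbrs_def by (auto simp: insert_commute)
  then show ?thesis
    unfolding deg_eq_card_nbrs nbrs_insert_edge[OF assms(2)]
    using assms(2) finite_nbrs[OF assms(1)] by auto
qed

lemma edge_pairs_insert_edge:
  "edge_pairs (insert {p, q} E) = insert (p, q) (insert (q, p) (edge_pairs E))"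
  unfolding edge_pairs_def by (auto simp: doubleton_eq_iff)

lemma abs_Suc_sq_diff:
  fixes a b :: nat
  shows "\<bar>int ((a + 1)^2) - int (b^2)\<bar> - \<bar>int (a^2) - int (b^2)\<bar>
         = (2 * int a + 1) * (if b \<le> a then 1 else -1)"
proof -
  define A B where "A = int (a^2)" and "B = int (b^2)"
  have Suc_sq: "int ((a + 1)^2) = A + (2 * int a + 1)"
    unfolding A_def by (simp add: power2_sum)
  show ?thesis
  proof (cases "b \<le> a")
    case True
    then have "B \<le> A" unfolding A_def B_def by (simp add: power_mono)
    then show ?thesis using True unfolding Suc_sq A_def[symmetric] B_def[symmetric] by simp
  next
    case False
    then have "A + (2 * int a + 1) \<le> B"
      unfolding B_def Suc_sq[symmetric] by (simp add: power_mono del: of_nat_power)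
    then show ?thesis using False unfolding Suc_sq A_def[symmetric] B_def[symmetric] by simp
  qed
qed

lemma sum_sq_deg_gap_increment:
  assumes G: "simple_graph V E" and "p \<noteq> q" "{p, q} \<notin> E"
  shows "(\<Sum>y\<in>nbrs E p. sq_deg_gap (insert {p, q} E) p y - sq_deg_gap E p y)
         = (2 * int (deg E p) + 1) * deg_balance E p"
proof -
  have "sq_deg_gap (insert {p, q} E) p y - sq_deg_gap E p y
        = (2 * int (deg E p) + 1) * (if deg E y \<le> deg E p then 1 else -1)"
    if "y \<in> nbrs E p" for y
  proof -
    have "y \<noteq> p" "y \<noteq> q"
      using that assms(3) not_in_nbrs_self[OF G] unfolding nbrs_def by auto
    then show ?thesis
      unfolding sq_deg_gap_def using deg_insert_edge[OF assms] abs_Suc_sq_diff by simp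
  qed
  then show ?thesis
    unfolding deg_balance_def by (simp add: sum_distrib_left cong: sum.cong)
qed

lemma sum_sq_deg_gap_insert_edge:
  assumes G: "simple_graph V E" and "p \<in> V" "q \<in> V" and pq: "p \<noteq> q" and new: "{p, q} \<notin> E"
  defines "E' \<equiv> insert {p, q} E"
  shows "(\<Sum>(x, y)\<in>edge_pairs E'. sq_deg_gap E' x y) = (\<Sum>(x, y)\<in>edge_pairs E. sq_deg_gap E x y)
           + 2 * ((2 * int (deg E p) + 1) * deg_balance E p + (2 * int (deg E q) + 1) * deg_balance E q
                  + \<bar>int ((deg E p + 1)^2) - int ((deg E q + 1)^2)\<bar>)"
proof -
  define \<delta> where "\<delta> x y = (if x = p \<or> x = q then sq_deg_gap E' x y - sq_deg_gap E x y else 0)" for x y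
  have deg': "deg E' x = deg E x + (if x = p \<or> x = q then 1 else 0)" for x
    unfolding E'_def using deg_insert_edge[OF G pq new] .
  \<comment> \<open>an old edge has at most one endpoint in \<open>{p, q}\<close>, so its term changes only there\<close>
  have old_pair: "sq_deg_gap E' x y = sq_deg_gap E x y + \<delta> x y + \<delta> y x" if "(x, y) \<in> edge_pairs E" for x y
  proof -
    have "{x, y} \<in> E" using that by (simp only: mem_edge_pairs_iff)
    then have "\<not> ((x = p \<or> x = q) \<and> (y = p \<or> y = q))"
      using new simple_graph_edgeD(3)[OF G] by (auto simp: insert_commute)
    then show ?thesis
      unfolding \<delta>_def sq_deg_gap_def deg' by (auto simp: abs_minus_commute add.commute)
  qed
  have "(\<Sum>(x, y)\<in>edge_pairs E. \<delta> x y) = (\<Sum>x\<in>V. \<Sum>y\<in>nbrs E x. \<delta> x y)"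
    using sum_edge_pairs_by_vertex[OF G] .
  also have "\<dots> = (\<Sum>x\<in>{p, q}. \<Sum>y\<in>nbrs E x. \<delta> x y)"
    by (rule sum.mono_neutral_right) (use G assms(2,3) in \<open>auto simp: simple_graph_def \<delta>_def\<close>)
  also have "\<dots> = (2 * int (deg E p) + 1) * deg_balance E p + (2 * int (deg E q) + 1) * deg_balance E q"
    using pq sum_sq_deg_gap_increment[OF G pq new] sum_sq_deg_gap_increment[OF G pq[symmetric]] new
    unfolding \<delta>_def E'_def by (simp add: insert_commute)
  finally have increments: "(\<Sum>(x, y)\<in>edge_pairs E. \<delta> x y) = \<dots>" .
  have "(\<Sum>(x, y)\<in>edge_pairs E'. sq_deg_gap E' x y)
        = sq_deg_gap E' p q + sq_deg_gap E' q p + (\<Sum>(x, y)\<in>edge_pairs E. sq_deg_gap E' x y)"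
    unfolding E'_def edge_pairs_insert_edge using pq new finite_edge_pairs[OF G]
    by (simp add: edge_pairs_def insert_commute)
  also have "(\<Sum>(x, y)\<in>edge_pairs E. sq_deg_gap E' x y)
        = (\<Sum>(x, y)\<in>edge_pairs E. sq_deg_gap E x y) + (\<Sum>(x, y)\<in>edge_pairs E. \<delta> x y)
          + (\<Sum>(x, y)\<in>edge_pairs E. \<delta> y x)"
    by (simp add: old_pair sum.distrib case_prod_beta cong: sum.cong)
  finally have "(\<Sum>(x, y)\<in>edge_pairs E'. sq_deg_gap E' x y)
        = sq_deg_gap E' p q + sq_deg_gap E' q p + (\<Sum>(x, y)\<in>edge_pairs E. sq_deg_gap E x y)
          + 2 * (\<Sum>(x, y)\<in>edge_pairs E. \<delta> x y)"
    using sum_edge_pairs_swap[of "\<lambda>y x. \<delta> x y" E] by simp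
  moreover have "sq_deg_gap E' p q = \<bar>int ((deg E p + 1)^2) - int ((deg E q + 1)^2)\<bar>"
    and "sq_deg_gap E' q p = \<bar>int ((deg E p + 1)^2) - int ((deg E q + 1)^2)\<bar>"
    unfolding sq_deg_gap_def deg' using pq by (simp_all add: abs_minus_commute)
  ultimately show ?thesis
    using increments by simp
qed

lemma cM2_insert_edge:
  assumes "simple_graph V E" "p \<in> V" "q \<in> V" "p \<noteq> q" "{p, q} \<notin> E"
  shows "cM2 (insert {p, q} E) = cM2 E
           + (2 * int (deg E p) + 1) * deg_balance E p + (2 * int (deg E q) + 1) * deg_balance E q
           + \<bar>int ((deg E p + 1)^2) - int ((deg E q + 1)^2)\<bar>"
proof -
  have half: "(s + 2 * d) div 2 = s div 2 + d" for s d :: int by simp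
  show ?thesis
    unfolding cM2_eq_sum_edge_pairs sum_sq_deg_gap_insert_edge[OF assms] half by (simp only: add.assoc)
qed

lemma deg_balance_nonneg:
  assumes G: "simple_graph V E" and "x \<in> Xset V E"
  shows "0 \<le> deg_balance E x"
proof -
  let ?N = "nbrs E x" and ?le = "{y. deg E y \<le> deg E x}"
  have "deg_balance E x = int (card (?N \<inter> ?le)) - int (card (?N \<inter> - ?le))"
    unfolding deg_balance_def by (simp add: sum.If_cases[OF finite_nbrs[OF G]])
  moreover have "out_deg E x \<le> card (?N \<inter> ?le)"
    unfolding out_deg_def arcs_def
    by (rule card_mono) (use finite_nbrs[OF G, of x] in \<open>auto simp: nbrs_def\<close>)
  moreover have "in_deg E x = card (?N \<inter> - ?le)"
    unfolding in_deg_def arcs_def nbrs_def by (rule arg_cong[where f = card]) (auto simp: insert_commute)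
  moreover have "in_deg E x \<le> out_deg E x"
    using assms(2) unfolding Xset_def by simp
  ultimately show ?thesis by linarith
qed

lemma cM2_insert_edge_ge:
  assumes "simple_graph V E" "p \<in> V" "q \<in> V" "p \<noteq> q" "{p, q} \<notin> E"
    and "0 \<le> deg_balance E p" "0 \<le> deg_balance E q"
  shows "cM2 E + \<bar>int ((deg E p + 1)^2) - int ((deg E q + 1)^2)\<bar> \<le> cM2 (insert {p, q} E)"
  unfolding cM2_insert_edge[OF assms(1-5)] using assms(6,7) by simp

lemma deg_balance_insert_edge_endpoint:
  assumes G: "simple_graph V E" and uv: "u \<noteq> v" "{u, v} \<notin> E" and "deg E v = deg E u"
  shows "deg_balance E u + 1 \<le> deg_balance (insert {u, v} E) u"
proof -
  let ?E' = "insert {u, v} E"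
  have deg': "deg ?E' y = deg E y + (if y = u \<or> y = v then 1 else 0)" for y
    using deg_insert_edge[OF G uv] .
  have v_new: "v \<notin> nbrs E u" using uv(2) unfolding nbrs_def by simp
  have "deg_balance ?E' u = 1 + (\<Sum>y\<in>nbrs E u. if deg E y \<le> deg E u + 1 then 1 else -1)"
  proof -
    have "nbrs ?E' u = insert v (nbrs E u)" using nbrs_insert_edge[OF uv(1)] uv(1) by auto
    moreover have "y \<noteq> u \<and> y \<noteq> v" if "y \<in> nbrs E u" for y
      using that v_new not_in_nbrs_self[OF G] by auto
    ultimately show ?thesis
      unfolding deg_balance_def using v_new finite_nbrs[OF G] assms(4) by (simp add: deg' cong: sum.cong)
  qed
  moreover have "deg_balance E u \<le> (\<Sum>y\<in>nbrs E u. if deg E y \<le> deg E u + 1 then 1 else -1)"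
    unfolding deg_balance_def by (rule sum_mono) simp
  ultimately show ?thesis by linarith
qed

lemma deg_balance_insert_edge_other:
  assumes G: "simple_graph V E" and uv: "u \<noteq> v" "{u, v} \<notin> E"
    and "w \<noteq> u" "w \<noteq> v" "{u, w} \<notin> E"
  shows "deg_balance E w - 2 \<le> deg_balance (insert {u, v} E) w"
proof -
  let ?E' = "insert {u, v} E"
  let ?sign = "\<lambda>E y. if deg E y \<le> deg E w then 1 else -1 :: int"
  have deg': "deg ?E' y = deg E y + (if y = u \<or> y = v then 1 else 0)" for y
    using deg_insert_edge[OF G uv] .
  have u_nbr: "u \<notin> nbrs E w" using assms(6) unfolding nbrs_def by (simp add: insert_commute)
  \<comment> \<open>only the neighbour \<open>v\<close> of \<open>w\<close> changes degree, which can flip one sign\<close>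
  have "(\<Sum>y\<in>nbrs E w. if y = v then -2 else 0) \<le> (\<Sum>y\<in>nbrs E w. ?sign ?E' y - ?sign E y)"
  proof (rule sum_mono)
    fix y assume "y \<in> nbrs E w"
    then have "y \<noteq> u" using u_nbr by auto
    then show "(if y = v then -2 else 0) \<le> ?sign ?E' y - ?sign E y"
      using assms(4,5) by (simp add: deg')
  qed
  moreover have "-2 \<le> (\<Sum>y\<in>nbrs E w. if y = v then -2 else (0::int))"
    using finite_nbrs[OF G, of w] by (simp add: sum.delta)
  moreover have "nbrs ?E' w = nbrs E w" using nbrs_insert_edge[OF uv(1)] assms(4,5) by simp
  ultimately show ?thesis
    unfolding deg_balance_def using assms(4,5) by (simp add: deg' sum_subtractf)
qed

lemma max_cM2_nonadjacent_deg_eq: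
  assumes G: "simple_graph V E" and max: "\<And>E'. simple_graph V E' \<Longrightarrow> cM2 E' \<le> cM2 E"
    and X: "u \<in> Xset V E" "v \<in> Xset V E" and uv: "u \<noteq> v" and new: "{u, v} \<notin> E"
  shows "deg E v = deg E u"
proof -
  have V: "u \<in> V" "v \<in> V" using X unfolding Xset_def by auto
  have "cM2 E + \<bar>int ((deg E u + 1)^2) - int ((deg E v + 1)^2)\<bar> \<le> cM2 (insert {u, v} E)"
    using cM2_insert_edge_ge[OF G V uv new] deg_balance_nonneg[OF G] X by blast
  also have "\<dots> \<le> cM2 E"
    using max simple_graph_insert_edge[OF G V uv] by blast
  finally have "(deg E u + 1)^2 = (deg E v + 1)^2" by simp
  then show ?thesis by simp
qed

lemma cM2_insert_edge_gain:
  assumes G: "simple_graph V E" and "p \<in> V" "q \<in> V" "p \<noteq> q" "{p, q} \<notin> E"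
    and deg: "deg E p = deg E q + 1" and "1 \<le> deg_balance E p" "-2 \<le> deg_balance E q"
  shows "cM2 E + 4 \<le> cM2 (insert {p, q} E)"
proof -
  define k where "k = int (deg E q)"
  have "(2 * k + 3) * 1 \<le> (2 * k + 3) * deg_balance E p"
    using assms(7) by (rule mult_left_mono) (simp add: k_def)
  then have "2 * k + 3 \<le> (2 * int (deg E p) + 1) * deg_balance E p"
    unfolding deg k_def by (simp add: algebra_simps)
  moreover have "(2 * k + 1) * -2 \<le> (2 * k + 1) * deg_balance E q"
    using assms(8) by (rule mult_left_mono) (simp add: k_def)
  then have "-2 * (2 * k + 1) \<le> (2 * int (deg E q) + 1) * deg_balance E q"
    unfolding k_def by (simp add: algebra_simps)
  moreover have "\<bar>int ((deg E p + 1)^2) - int ((deg E q + 1)^2)\<bar> = 2 * k + 3"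
    unfolding deg k_def by (simp add: power2_eq_square algebra_simps)
  ultimately show ?thesis
    unfolding cM2_insert_edge[OF assms(1-5)] by simp
qed

lemma max_cM2_no_two_nonneighbours_in_X:
  assumes G: "simple_graph V E" and max: "\<And>E'. simple_graph V E' \<Longrightarrow> cM2 E' \<le> cM2 E"
    and X: "u \<in> Xset V E" "v \<in> Xset V E" "w \<in> Xset V E"
    and uv: "u \<noteq> v" and uw: "u \<noteq> w" and vw: "v \<noteq> w"
    and new: "{u, v} \<notin> E" "{u, w} \<notin> E"
  shows False
proof -
  have V: "u \<in> V" "v \<in> V" "w \<in> V" using X unfolding Xset_def by auto
  have bal: "0 \<le> deg_balance E u" "0 \<le> deg_balance E v" "0 \<le> deg_balance E w"
    using deg_balance_nonneg[OF G] X by auto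
  have dv: "deg E v = deg E u" and dw: "deg E w = deg E u"
    using max_cM2_nonadjacent_deg_eq[OF G max] X uv uw new by auto
  define E1 where "E1 = insert {u, v} E"
  have G1: "simple_graph V E1"
    unfolding E1_def using simple_graph_insert_edge[OF G V(1,2) uv] .
  have "cM2 E \<le> cM2 E1"
    unfolding E1_def using cM2_insert_edge_ge[OF G V(1,2) uv new(1) bal(1,2)] by linarith
  moreover have "cM2 E1 + 4 \<le> cM2 (insert {u, w} E1)"
  proof (rule cM2_insert_edge_gain[OF G1 V(1,3) uw])
    show "{u, w} \<notin> E1"
      unfolding E1_def using new(2) uw vw by (auto simp: doubleton_eq_iff)
    show "deg E1 u = deg E1 w + 1"
      unfolding E1_def using deg_insert_edge[OF G uv new(1)] uw vw dw by auto
    show "1 \<le> deg_balance E1 u"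
      unfolding E1_def using deg_balance_insert_edge_endpoint[OF G uv new(1) dv] bal(1) by linarith
    show "-2 \<le> deg_balance E1 w"
      unfolding E1_def
      using deg_balance_insert_edge_other[OF G uv new(1) uw[symmetric] vw[symmetric] new(2)] bal(3)
      by linarith
  qed
  moreover have "cM2 (insert {u, w} E1) \<le> cM2 E"
    using max simple_graph_insert_edge[OF G1 V(1,3) uw] by blast
  ultimately show False by linarith
qed

lemma card_eq_induced_deg_plus_non_nbrs:
  assumes "finite S" "u \<in> S" "u \<notin> nbrs E u"
  shows "card S = induced_deg E S u + card (S - insert u (nbrs E u)) + 1"
proof -
  have "S - {u} = (S \<inter> nbrs E u) \<union> (S - insert u (nbrs E u))"
    using assms(3) by auto
  also have "card \<dots> = card (S \<inter> nbrs E u) + card (S - insert u (nbrs E u))"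
    by (rule card_Un_disjoint) (use assms(1) in auto)
  finally have "card (S - {u}) = \<dots>" .
  moreover have "card S = card (S - {u}) + 1"
    using assms(1,2) card_Suc_Diff1 by fastforce
  moreover have "induced_deg E S u = card (S \<inter> nbrs E u)"
    unfolding induced_deg_def nbrs_def by (simp add: Int_def)
  ultimately show ?thesis by simp
qed

theorem corollary1:
  fixes V :: "'a set" and E :: "'a set set"
  assumes "simple_graph V E"
    and "\<forall>(V' :: 'a set) E'. simple_graph V' E' \<and> card V' = card V \<longrightarrow> cM2 E' \<le> cM2 E"
  shows "\<forall>u \<in> Xset V E. int (induced_deg E (Xset V E) u) \<ge> int (card (Xset V E)) - 2"
proof
  fix u assume u: "u \<in> Xset V E"
  have max: "cM2 E' \<le> cM2 E" if "simple_graph V E'" for E'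
    using assms(2) that by blast
  have "finite (Xset V E)"
    using assms(1) unfolding simple_graph_def Xset_def by simp
  moreover have "card (Xset V E - insert u (nbrs E u)) \<le> 1"
  proof -
    have "v = w" if "v \<in> Xset V E - insert u (nbrs E u)" "w \<in> Xset V E - insert u (nbrs E u)" for v w
      using max_cM2_no_two_nonneighbours_in_X[of V E u v w, OF assms(1) max u] that
      by (auto simp: nbrs_def)
    then show ?thesis
      using card_le_Suc0_iff_eq[OF finite_Diff[OF \<open>finite (Xset V E)\<close>]] by auto
  qed
  ultimately show "int (induced_deg E (Xset V E) u) \<ge> int (card (Xset V E)) - 2"
    using card_eq_induced_deg_plus_non_nbrs[OF _ u not_in_nbrs_self[OF assms(1)]] by linarith
qed

end
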